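(* Let $r\ge 1$, $n\ge 1$ and $k\ge 0$ be integers and let $s:[n]\to\{0,1,\dots,r\}$. The simplicial complex $C_s(n,k,\dots,k)$ (with $k$ repeated $r$ times) is non-empty if and only if $\sum_{i=1}^n s(i)\ge rk$.
   Context: For $\mathbf{k}=(k_1,\dots,k_r)$ with $k_i\ge 0$ and $s:[n]\to\{0,\dots,r\}$, the complex $C_s(n,\mathbf{k})$ has as vertices the $r$-tuples $(A_1,\dots,A_r)$ of subsets of $[n]$ such that $|A_j|\ge k_j$ for all $j$ and, for each $x\in[n]$, the number of $1\le j\le r$ with $x\in A_j$ is exactly $s(x)$. A set of vertices $\{(A_1^i,\dots,A_r^i)\}_{i\in I}$ is a face iff $|\bigcap_{i\in I}A_j^i|\ge k_j$ for all $j=1,\dots,r$. Non-empty means it has at least one vertex. *)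

theory Defs
  imports Main
begin

text \<open>An r-tuple (A_1,...,A_r) of subsets of [n] is represented as a function
  A :: nat \<Rightarrow> nat set, with A j meaningful for j in {1..r} and A j = {} otherwise.
  The vector k = (k_1,...,k_r) is a function kk :: nat \<Rightarrow> nat (used on {1..r}),
  and s :: nat \<Rightarrow> nat is used on [n] = {1..n}.\<close>

definition Cs_vertices :: "nat \<Rightarrow> nat \<Rightarrow> (nat \<Rightarrow> nat) \<Rightarrow> (nat \<Rightarrow> nat) \<Rightarrow> (nat \<Rightarrow> nat set) set" where
  "Cs_vertices r n kk s =
     {A. (\<forall>j\<in>{1..r}. A j \<subseteq> {1..n} \<and> card (A j) \<ge> kk j)
       \<and> (\<forall>j. j \<notin> {1..r} \<longrightarrow> A j = {})
       \<and> (\<forall>x\<in>{1..n}. card {j\<in>{1..r}. x \<in> A j} = s x)}"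

definition Cs_faces :: "nat \<Rightarrow> nat \<Rightarrow> (nat \<Rightarrow> nat) \<Rightarrow> (nat \<Rightarrow> nat) \<Rightarrow> (nat \<Rightarrow> nat set) set set" where
  "Cs_faces r n kk s =
     {F. F \<subseteq> Cs_vertices r n kk s \<and>
         (F \<noteq> {} \<longrightarrow> (\<forall>j\<in>{1..r}. card (\<Inter>A\<in>F. A j) \<ge> kk j))}"

definition Cs_nonempty :: "nat \<Rightarrow> nat \<Rightarrow> (nat \<Rightarrow> nat) \<Rightarrow> (nat \<Rightarrow> nat) \<Rightarrow> bool" where
  "Cs_nonempty r n kk s \<longleftrightarrow> (\<exists>v. {v} \<in> Cs_faces r n kk s)"

end

theory Submission
  imports Defs
begin

text \<open>A vertex covers each point x exactly s(x) times, so double counting gives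
  \<open>\<Sum> s(x) = \<Sum> |A\<^sub>j| \<ge> rk\<close>. Conversely, induct on r: the last set must contain every
  point with s(x) = r, so take it to consist of these points together with further points of
  positive multiplicity, up to size max(k, #{x. s(x) = r}). Subtracting its indicator from s
  leaves multiplicities at most r - 1 whose total is still at least (r - 1)k.\<close>

lemma Cs_nonempty_iff_vertices_nonempty:
  "Cs_nonempty r n kk s \<longleftrightarrow> Cs_vertices r n kk s \<noteq> {}"
  unfolding Cs_nonempty_def Cs_faces_def ex_in_conv[symmetric] by (auto simp: Cs_vertices_def)

lemma sum_multiplicities_eq_sum_card:
  assumes "A \<in> Cs_vertices r n kk s"
  shows "(\<Sum>i=1..n. s i) = (\<Sum>j=1..r. card (A j))"
proof -
  have "(\<Sum>i=1..n. s i) = (\<Sum>x=1..n. card {j\<in>{1..r}. x \<in> A j})"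
    using assms by (simp add: Cs_vertices_def)
  also have "\<dots> = (\<Sum>j=1..r. card (A j))"
  proof (rule sum_multicount_gen)
    have "{x\<in>{1..n}. x \<in> A j} = A j" if "j \<in> {1..r}" for j
      using assms that unfolding Cs_vertices_def by blast
    then show "\<forall>j\<in>{1..r}. card {x\<in>{1..n}. x \<in> A j} = card (A j)"
      by simp
  qed simp_all
  finally show ?thesis .
qed

lemma sum_bounds_le_sum_multiplicities:
  assumes "A \<in> Cs_vertices r n kk s"
  shows "(\<Sum>j=1..r. kk j) \<le> (\<Sum>i=1..n. s i)"
proof -
  have "(\<Sum>j=1..r. kk j) \<le> (\<Sum>j=1..r. card (A j))"
    using assms by (intro sum_mono) (simp add: Cs_vertices_def)
  then show ?thesis
    using sum_multiplicities_eq_sum_card[OF assms] by simp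
qed

lemma Cs_vertices_extend:
  assumes A: "A \<in> Cs_vertices r n kk s'"
    and B: "B \<subseteq> {1..n}" "kk (Suc r) \<le> card B"
    and s: "\<forall>x\<in>{1..n}. s x = s' x + of_bool (x \<in> B)"
  shows "A(Suc r := B) \<in> Cs_vertices (Suc r) n kk s"
  unfolding Cs_vertices_def
proof (intro CollectI conjI ballI allI impI)
  fix j assume "j \<in> {1..Suc r}"
  then show "(A(Suc r := B)) j \<subseteq> {1..n}" "kk j \<le> card ((A(Suc r := B)) j)"
    using A B by (auto simp: Cs_vertices_def)
next
  fix j assume "j \<notin> {1..Suc r}"
  then show "(A(Suc r := B)) j = {}"
    using A by (auto simp: Cs_vertices_def)
next
  fix x assume x: "x \<in> {1..n}"
  have "{j\<in>{1..Suc r}. x \<in> (A(Suc r := B)) j}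
      = {j\<in>{1..r}. x \<in> A j} \<union> (if x \<in> B then {Suc r} else {})"
    by auto
  then have "card {j\<in>{1..Suc r}. x \<in> (A(Suc r := B)) j}
      = card {j\<in>{1..r}. x \<in> A j} + of_bool (x \<in> B)"
    by (simp add: card_Un_disjoint)
  also have "\<dots> = s x"
    using A s x by (simp add: Cs_vertices_def)
  finally show "card {j\<in>{1..Suc r}. x \<in> (A(Suc r := B)) j} = s x" .
qed

lemma exists_removable_block:
  fixes s :: "'a \<Rightarrow> nat"
  assumes I: "finite I"
    and s_le: "\<forall>x\<in>I. s x \<le> Suc r"
    and sum_ge: "Suc r * k \<le> (\<Sum>x\<in>I. s x)"
  obtains B where "{x\<in>I. s x = Suc r} \<subseteq> B" "B \<subseteq> {x\<in>I. 0 < s x}"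
    "k \<le> card B" "r * k + card B \<le> (\<Sum>x\<in>I. s x)"
proof -
  define C where "C = {x\<in>I. s x = Suc r}"
  define D where "D = {x\<in>I. 0 < s x}"
  define N where "N = max k (card C)"
  have CD: "C \<subseteq> D" "finite D"
    using I by (auto simp: C_def D_def)
  have "(\<Sum>x\<in>I. s x) = (\<Sum>x\<in>D. s x)"
    unfolding D_def using I by (intro sum.mono_neutral_right) auto
  also have "\<dots> \<le> (\<Sum>x\<in>D. Suc r)"
    using s_le by (intro sum_mono) (simp add: D_def)
  finally have "Suc r * k \<le> Suc r * card D"
    using sum_ge by (simp add: mult.commute)
  then have "k \<le> card D"
    by (simp only: Suc_mult_le_cancel1)
  moreover have "card C \<le> card D"
    using CD by (simp add: card_mono)
  ultimately have N_le: "N \<le> card D"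
    by (simp add: N_def)
  have "Suc r * card C = (\<Sum>x\<in>C. s x)"
    by (simp add: C_def)
  also have "\<dots> \<le> (\<Sum>x\<in>I. s x)"
    using I by (intro sum_mono2) (auto simp: C_def)
  finally have C_le: "Suc r * card C \<le> (\<Sum>x\<in>I. s x)" .
  have "r * k + N \<le> (\<Sum>x\<in>I. s x)"
  proof (cases "k \<le> card C")
    case True
    then have "r * k + N \<le> Suc r * card C"
      by (simp add: N_def)
    then show ?thesis
      using C_le by (rule le_trans)
  next
    case False
    then show ?thesis
      using sum_ge by (simp add: N_def)
  qed
  moreover obtain B where "C \<subseteq> B" "B \<subseteq> D" "card B = N"
    using exists_subset_between[of C N D] CD N_le by (auto simp: N_def)
  ultimately show thesis
    using that by (simp add: C_def D_def N_def)
qed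

lemma Cs_vertices_nonempty_if_sum_ge:
  assumes "\<forall>x\<in>{1..n}. s x \<le> r" "r * k \<le> (\<Sum>i=1..n. s i)"
  shows "Cs_vertices r n (\<lambda>_. k) s \<noteq> {}"
  using assms
proof (induction r arbitrary: s)
  case 0
  then have "(\<lambda>_. {}) \<in> Cs_vertices 0 n (\<lambda>_. k) s"
    by (simp add: Cs_vertices_def)
  then show ?case by blast
next
  case (Suc r)
  obtain B where CB: "{x\<in>{1..n}. s x = Suc r} \<subseteq> B" and BD: "B \<subseteq> {x\<in>{1..n}. 0 < s x}"
    and k_le: "k \<le> card B" and sum_ge: "r * k + card B \<le> (\<Sum>i=1..n. s i)"
    using exists_removable_block[of "{1..n}" s r k] Suc.prems by auto
  define s' where "s' x = s x - of_bool (x \<in> B)" for x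
  have s_eq: "\<forall>x\<in>{1..n}. s x = s' x + of_bool (x \<in> B)"
    using BD by (auto simp: s'_def)
  have "\<forall>x\<in>{1..n}. s' x \<le> r"
    using CB Suc.prems(1) by (force simp: s'_def)
  moreover have "(\<Sum>i=1..n. s i) = (\<Sum>i=1..n. s' i) + card B"
  proof -
    have "{1..n} \<inter> B = B"
      using BD by blast
    then show ?thesis
      using s_eq by (simp add: sum.distrib)
  qed
  ultimately obtain A where "A \<in> Cs_vertices r n (\<lambda>_. k) s'"
    using Suc.IH[of s'] sum_ge by fastforce
  then have "A(Suc r := B) \<in> Cs_vertices (Suc r) n (\<lambda>_. k) s"
    using BD k_le s_eq by (intro Cs_vertices_extend) auto
  then show ?case by blast
qed

theorem mainTheorem4:
  fixes r n k :: nat and s :: "nat \<Rightarrow> nat"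
  assumes "r \<ge> 1" and "n \<ge> 1"
    and "\<forall>i\<in>{1..n}. s i \<le> r"
  shows "Cs_nonempty r n (\<lambda>_. k) s \<longleftrightarrow> (\<Sum>i=1..n. s i) \<ge> r * k"
proof
  assume "Cs_nonempty r n (\<lambda>_. k) s"
  then obtain A where "A \<in> Cs_vertices r n (\<lambda>_. k) s"
    by (auto simp: Cs_nonempty_iff_vertices_nonempty)
  from sum_bounds_le_sum_multiplicities[OF this] show "(\<Sum>i=1..n. s i) \<ge> r * k"
    by simp
next
  assume "(\<Sum>i=1..n. s i) \<ge> r * k"
  with assms(3) show "Cs_nonempty r n (\<lambda>_. k) s"
    by (simp add: Cs_nonempty_iff_vertices_nonempty Cs_vertices_nonempty_if_sum_ge)
qed

end
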